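(* There exists a rational Diophantine sextuple. Specifically, the set $$\left\{ \tfrac{11}{192},\ \tfrac{35}{192},\ \tfrac{155}{27},\ \tfrac{512}{27},\ \tfrac{1235}{48},\ \tfrac{180873}{16} \right\}$$ consists of six distinct positive rational numbers such that for any two distinct elements $x, y$ of the set, $xy+1$ is the square of a rational number.
   Context: A rational Diophantine $m$-tuple is a set of $m$ distinct positive rational numbers such that the product of any two distinct elements, plus $1$, is the square of a rational number. A sextuple is the case $m=6$. *)

theory Defs
  imports Complex_Main
begin

definition rat_diophantine_tuple :: "nat \<Rightarrow> rat set \<Rightarrow> bool" where
  "rat_diophantine_tuple m S \<longleftrightarrow>
     finite S \<and> card S = m \<and> (\<forall>x\<in>S. x > 0) \<and>
     (\<forall>x\<in>S. \<forall>y\<in>S. x \<noteq> y \<longrightarrow> (\<exists>r::rat. x * y + 1 = r ^ 2))"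

end

theory Submission
  imports Defs
begin

lemma rat_diophantine_tuple_of_list:
  fixes xs :: "rat list"
  assumes "distinct xs"
    and "\<forall>x\<in>set xs. x > 0"
    \<comment> \<open>the relation is symmetric, so this asks for one witness per unordered pair\<close>
    and "sorted_wrt (\<lambda>x y. \<exists>r. x * y + 1 = r ^ 2) xs"
  shows "rat_diophantine_tuple (length xs) (set xs)"
  unfolding rat_diophantine_tuple_def
proof (intro conjI ballI impI)
  show "card (set xs) = length xs"
    using assms(1) by (rule distinct_card)
  fix x y
  assume "x \<in> set xs" "y \<in> set xs" "x \<noteq> y"
  then obtain i j where ij: "i < length xs" "j < length xs" "i \<noteq> j" "xs ! i = x" "xs ! j = y"
    by (metis in_set_conv_nth)
  show "\<exists>r. x * y + 1 = r ^ 2"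
  proof (cases "i < j")
    case True
    then show ?thesis
      using assms(3) ij by (auto simp: sorted_wrt_iff_nth_less)
  next
    case False
    then have "\<exists>r. y * x + 1 = r ^ 2"
      using assms(3) ij by (auto simp: sorted_wrt_iff_nth_less)
    then show ?thesis
      by (simp add: mult.commute)
  qed
qed (use assms(2) in auto)

theorem mainTheorem1:
  shows "(\<exists>S. rat_diophantine_tuple 6 S) \<and>
         rat_diophantine_tuple 6 {11/192, 35/192, 155/27, 512/27, 1235/48, 180873/16}"
proof -
  have squares:
    "(11/192) * (35/192) + 1 = (193/192 :: rat) ^ 2"
    "(11/192) * (155/27) + 1 = (83/72 :: rat) ^ 2"
    "(11/192) * (512/27) + 1 = (13/9 :: rat) ^ 2"
    "(11/192) * (1235/48) + 1 = (151/96 :: rat) ^ 2"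
    "(11/192) * (180873/16) + 1 = (815/32 :: rat) ^ 2"
    "(35/192) * (155/27) + 1 = (103/72 :: rat) ^ 2"
    "(35/192) * (512/27) + 1 = (19/9 :: rat) ^ 2"
    "(35/192) * (1235/48) + 1 = (229/96 :: rat) ^ 2"
    "(35/192) * (180873/16) + 1 = (1453/32 :: rat) ^ 2"
    "(155/27) * (512/27) + 1 = (283/27 :: rat) ^ 2"
    "(155/27) * (1235/48) + 1 = (439/36 :: rat) ^ 2"
    "(155/27) * (180873/16) + 1 = (1019/4 :: rat) ^ 2"
    "(512/27) * (1235/48) + 1 = (199/9 :: rat) ^ 2"
    "(512/27) * (180873/16) + 1 = (463 :: rat) ^ 2"
    "(1235/48) * (180873/16) + 1 = (8629/16 :: rat) ^ 2"
    by (simp_all add: power2_eq_square)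
  let ?xs = "[11/192, 35/192, 155/27, 512/27, 1235/48, 180873/16 :: rat]"
  have "sorted_wrt (\<lambda>x y. \<exists>r. x * y + 1 = r ^ 2) ?xs"
    unfolding sorted_wrt.simps list.set by (blast intro: squares)
  then have "rat_diophantine_tuple (length ?xs) (set ?xs)"
    by (intro rat_diophantine_tuple_of_list) auto
  then show ?thesis
    by (auto simp: numeral_eq_Suc)
qed

end
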